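(* Let $\mathbb{X}$ be a Cartesian left additive category and $f_\bullet:A\to B$ a pre-$\mathsf{D}$-sequence. The following are equivalent: (i) $f_\bullet$ is a $\mathsf{D}$-sequence; (ii) for each $n\in\mathbb{N}$ and $k\le n$: [DS.1$'$] $\mathsf{P}^k(\langle1,0\rangle)f_{n+1}=0$; [DS.2$'$] $\mathsf{P}^k(1\times(\pi_0+\pi_1))f_{n+1}=\mathsf{P}^k(1\times\pi_0)f_{n+1}+\mathsf{P}^k(1\times\pi_1)f_{n+1}$; [DS.3$'$] $\mathsf{P}^k(\ell)f_{n+2}=f_{n+1}$ with $\ell:\mathsf{P}^{n-k+1}(A)\to\mathsf{P}^{n-k+2}(A)$; [DS.4$'$] $\mathsf{P}^k(c)f_{n+2}=f_{n+2}$ with $c:\mathsf{P}^{n-k+2}(A)\to\mathsf{P}^{n-k+2}(A)$. Here, with $E=\mathsf{P}^{n-k}(A)$, $\langle1,0\rangle:E\to E\times E$, $1\times(\pi_0+\pi_1),1\times\pi_j:E\times(E\times E)\to E\times E$, $\ell=\langle1,0\rangle\times\langle0,1\rangle:E\times E\to(E\times E)\times(E\times E)$ and $c=\langle\langle\pi_0\pi_0,\pi_1\pi_0\rangle,\langle\pi_0\pi_1,\pi_1\pi_1\rangle\rangle$ on $(E\times E)\times(E\times E)$.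
   Context: Composition in diagrammatic order. A Cartesian left additive category: finite products, hom-sets commutative monoids with $f(g+h)=fg+fh$, $f0=0$, projections additive. $\mathsf{P}(A)=A\times A$, $\mathsf{P}(f)=f\times f$. A pre-$\mathsf{D}$-sequence $f_\bullet:A\to B$ is a sequence $(f_0,f_1,\dots)$ with $f_n:\mathsf{P}^n(A)\to B$. For $h:A'\to A$, $h\cdot f_\bullet$ is the pre-$\mathsf{D}$-sequence $(h\cdot f_\bullet)_n=\mathsf{P}^n(h)f_n$; $\mathsf{D}[f_\bullet]:\mathsf{P}(A)\to B$ is $\mathsf{D}[f_\bullet]_n=f_{n+1}$, and $\mathsf{D}^m$ is its iterate; sums and $0_\bullet$ are pointwise. $f_\bullet$ is a $\mathsf{D}$-sequence if for all $n$, with $C=\mathsf{P}^n(A)$ and the maps $\langle1,0\rangle$, $1\times(\pi_0+\pi_1)$, $1\times\pi_j$, $\ell$, $c$ defined as in the claim for the object $C$: [DS.1] $\langle1,0\rangle\cdot\mathsf{D}^{n+1}[f_\bullet]=0_\bullet$; [DS.2] $(1\times(\pi_0+\pi_1))\cdot\mathsf{D}^{n+1}[f_\bullet]=((1\times\pi_0)\cdot\mathsf{D}^{n+1}[f_\bullet])+((1\times\pi_1)\cdot\mathsf{D}^{n+1}[f_\bullet])$; [DS.3] $\ell\cdot\mathsf{D}^{n+2}[f_\bullet]=\mathsf{D}^{n+1}[f_\bullet]$; [DS.4] $c\cdot\mathsf{D}^{n+2}[f_\bullet]=\mathsf{D}^{n+2}[f_\bullet]$. *)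

theory Defs
  imports Main
begin

text \<open>Composition is written in DIAGRAMMATIC order: ccomp X f g is "f then g".\<close>

record ('o,'a) cla =
  cdom  :: "'a \<Rightarrow> 'o"
  ccod  :: "'a \<Rightarrow> 'o"
  ccomp :: "'a \<Rightarrow> 'a \<Rightarrow> 'a"
  cid   :: "'o \<Rightarrow> 'a"
  cprod :: "'o \<Rightarrow> 'o \<Rightarrow> 'o"
  cpi0  :: "'o \<Rightarrow> 'o \<Rightarrow> 'a"
  cpi1  :: "'o \<Rightarrow> 'o \<Rightarrow> 'a"
  cpair :: "'a \<Rightarrow> 'a \<Rightarrow> 'a"
  cterm :: "'o"
  cbang :: "'o \<Rightarrow> 'a"
  cadd  :: "'a \<Rightarrow> 'a \<Rightarrow> 'a"
  czero :: "'o \<Rightarrow> 'o \<Rightarrow> 'a"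

definition hom :: "('o,'a) cla \<Rightarrow> 'o \<Rightarrow> 'o \<Rightarrow> 'a set" where
  "hom X A B = {f. cdom X f = A \<and> ccod X f = B}"

locale cla_cat =
  fixes X :: "('o,'a) cla"
  assumes id_hom: "cid X A \<in> hom X A A"
    and comp_hom: "f \<in> hom X A B \<Longrightarrow> g \<in> hom X B C \<Longrightarrow> ccomp X f g \<in> hom X A C"
    and id_left: "f \<in> hom X A B \<Longrightarrow> ccomp X (cid X A) f = f"
    and id_right: "f \<in> hom X A B \<Longrightarrow> ccomp X f (cid X B) = f"
    and comp_assoc: "f \<in> hom X A B \<Longrightarrow> g \<in> hom X B C \<Longrightarrow> h \<in> hom X C D \<Longrightarrow>
        ccomp X (ccomp X f g) h = ccomp X f (ccomp X g h)"
    and pi0_hom: "cpi0 X A B \<in> hom X (cprod X A B) A"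
    and pi1_hom: "cpi1 X A B \<in> hom X (cprod X A B) B"
    and pair_hom: "f \<in> hom X C A \<Longrightarrow> g \<in> hom X C B \<Longrightarrow> cpair X f g \<in> hom X C (cprod X A B)"
    and pair_pi0: "f \<in> hom X C A \<Longrightarrow> g \<in> hom X C B \<Longrightarrow> ccomp X (cpair X f g) (cpi0 X A B) = f"
    and pair_pi1: "f \<in> hom X C A \<Longrightarrow> g \<in> hom X C B \<Longrightarrow> ccomp X (cpair X f g) (cpi1 X A B) = g"
    and pair_unique: "h \<in> hom X C (cprod X A B) \<Longrightarrow>
        cpair X (ccomp X h (cpi0 X A B)) (ccomp X h (cpi1 X A B)) = h"
    and bang_hom: "cbang X A \<in> hom X A (cterm X)"
    and bang_unique: "f \<in> hom X A (cterm X) \<Longrightarrow> f = cbang X A"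
    and add_hom: "f \<in> hom X A B \<Longrightarrow> g \<in> hom X A B \<Longrightarrow> cadd X f g \<in> hom X A B"
    and zero_hom: "czero X A B \<in> hom X A B"
    and add_assoc: "f \<in> hom X A B \<Longrightarrow> g \<in> hom X A B \<Longrightarrow> h \<in> hom X A B \<Longrightarrow>
        cadd X (cadd X f g) h = cadd X f (cadd X g h)"
    and add_comm: "f \<in> hom X A B \<Longrightarrow> g \<in> hom X A B \<Longrightarrow> cadd X f g = cadd X g f"
    and add_zero: "f \<in> hom X A B \<Longrightarrow> cadd X f (czero X A B) = f"
    and comp_add: "f \<in> hom X A B \<Longrightarrow> g \<in> hom X B C \<Longrightarrow> h \<in> hom X B C \<Longrightarrow>
        ccomp X f (cadd X g h) = cadd X (ccomp X f g) (ccomp X f h)"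
    and comp_zero: "f \<in> hom X A B \<Longrightarrow> ccomp X f (czero X B C) = czero X A C"
    and add_pi0: "f \<in> hom X C (cprod X A B) \<Longrightarrow> g \<in> hom X C (cprod X A B) \<Longrightarrow>
        ccomp X (cadd X f g) (cpi0 X A B) = cadd X (ccomp X f (cpi0 X A B)) (ccomp X g (cpi0 X A B))"
    and zero_pi0: "ccomp X (czero X C (cprod X A B)) (cpi0 X A B) = czero X C A"
    and add_pi1: "f \<in> hom X C (cprod X A B) \<Longrightarrow> g \<in> hom X C (cprod X A B) \<Longrightarrow>
        ccomp X (cadd X f g) (cpi1 X A B) = cadd X (ccomp X f (cpi1 X A B)) (ccomp X g (cpi1 X A B))"
    and zero_pi1: "ccomp X (czero X C (cprod X A B)) (cpi1 X A B) = czero X C B"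

definition times :: "('o,'a) cla \<Rightarrow> 'a \<Rightarrow> 'a \<Rightarrow> 'a" where
  "times X f g = cpair X (ccomp X (cpi0 X (cdom X f) (cdom X g)) f)
                         (ccomp X (cpi1 X (cdom X f) (cdom X g)) g)"

definition Pob :: "('o,'a) cla \<Rightarrow> nat \<Rightarrow> 'o \<Rightarrow> 'o" where
  "Pob X n A = ((\<lambda>C. cprod X C C) ^^ n) A"

definition Par :: "('o,'a) cla \<Rightarrow> nat \<Rightarrow> 'a \<Rightarrow> 'a" where
  "Par X n h = ((\<lambda>g. times X g g) ^^ n) h"

definition unit10 :: "('o,'a) cla \<Rightarrow> 'o \<Rightarrow> 'a" where
  "unit10 X C = cpair X (cid X C) (czero X C C)"

definition unit01 :: "('o,'a) cla \<Rightarrow> 'o \<Rightarrow> 'a" where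
  "unit01 X C = cpair X (czero X C C) (cid X C)"

definition sumpi :: "('o,'a) cla \<Rightarrow> 'o \<Rightarrow> 'a" where
  "sumpi X C = times X (cid X C) (cadd X (cpi0 X C C) (cpi1 X C C))"

definition idpi0 :: "('o,'a) cla \<Rightarrow> 'o \<Rightarrow> 'a" where
  "idpi0 X C = times X (cid X C) (cpi0 X C C)"

definition idpi1 :: "('o,'a) cla \<Rightarrow> 'o \<Rightarrow> 'a" where
  "idpi1 X C = times X (cid X C) (cpi1 X C C)"

definition lift :: "('o,'a) cla \<Rightarrow> 'o \<Rightarrow> 'a" where
  "lift X C = times X (unit10 X C) (unit01 X C)"

definition flip :: "('o,'a) cla \<Rightarrow> 'o \<Rightarrow> 'a" where
  "flip X C = (let D = cprod X C C in
     cpair X (cpair X (ccomp X (cpi0 X D D) (cpi0 X C C)) (ccomp X (cpi1 X D D) (cpi0 X C C)))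
             (cpair X (ccomp X (cpi0 X D D) (cpi1 X C C)) (ccomp X (cpi1 X D D) (cpi1 X C C))))"

definition pre_dseq :: "('o,'a) cla \<Rightarrow> 'o \<Rightarrow> 'o \<Rightarrow> (nat \<Rightarrow> 'a) \<Rightarrow> bool" where
  "pre_dseq X A B f \<longleftrightarrow> (\<forall>n. f n \<in> hom X (Pob X n A) B)"

definition act :: "('o,'a) cla \<Rightarrow> 'a \<Rightarrow> (nat \<Rightarrow> 'a) \<Rightarrow> (nat \<Rightarrow> 'a)" where
  "act X h f = (\<lambda>n. ccomp X (Par X n h) (f n))"

definition Dsq :: "(nat \<Rightarrow> 'a) \<Rightarrow> (nat \<Rightarrow> 'a)" where
  "Dsq f = (\<lambda>n. f (Suc n))"

definition sadd :: "('o,'a) cla \<Rightarrow> (nat \<Rightarrow> 'a) \<Rightarrow> (nat \<Rightarrow> 'a) \<Rightarrow> (nat \<Rightarrow> 'a)" where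
  "sadd X f g = (\<lambda>n. cadd X (f n) (g n))"

definition szero :: "('o,'a) cla \<Rightarrow> 'o \<Rightarrow> 'o \<Rightarrow> (nat \<Rightarrow> 'a)" where
  "szero X A B = (\<lambda>n. czero X (Pob X n A) B)"

definition dseq :: "('o,'a) cla \<Rightarrow> 'o \<Rightarrow> 'o \<Rightarrow> (nat \<Rightarrow> 'a) \<Rightarrow> bool" where
  "dseq X A B f \<longleftrightarrow> pre_dseq X A B f \<and>
    (\<forall>n. let C = Pob X n A in
      act X (unit10 X C) ((Dsq ^^ (n+1)) f) = szero X C B \<and>
      act X (sumpi X C) ((Dsq ^^ (n+1)) f) =
        sadd X (act X (idpi0 X C) ((Dsq ^^ (n+1)) f)) (act X (idpi1 X C) ((Dsq ^^ (n+1)) f)) \<and>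
      act X (lift X C) ((Dsq ^^ (n+2)) f) = (Dsq ^^ (n+1)) f \<and>
      act X (flip X C) ((Dsq ^^ (n+2)) f) = (Dsq ^^ (n+2)) f)"

end

theory Submission
  imports Defs
begin

text \<open>Both sides say the same thing after reindexing: the m-th component of
  h \<cdot> D^(j+1)[f] is P^m(h) f_(j+m+1), so axiom [DS.i] at level j, component m, is
  condition [DS.i'] with n = j + m and k = m. Hence none of the axioms of a Cartesian
  left additive category is needed.\<close>

lemma Dsq_funpow: "(Dsq ^^ j) f = (\<lambda>i. f (j + i))"
  by (induction j arbitrary: f) (auto simp: Dsq_def)

lemma Pob_Pob: "Pob X k (Pob X j A) = Pob X (k + j) A"
  unfolding Pob_def by (simp add: funpow_add)

definition dseq_axioms_at :: "('o,'a) cla \<Rightarrow> 'o \<Rightarrow> 'o \<Rightarrow> (nat \<Rightarrow> 'a) \<Rightarrow> nat \<Rightarrow> nat \<Rightarrow> bool" where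
  "dseq_axioms_at X A B f j k \<longleftrightarrow> (let E = Pob X j A in
      ccomp X (Par X k (unit10 X E)) (f (j+k+1)) = czero X (Pob X (j+k) A) B \<and>
      ccomp X (Par X k (sumpi X E)) (f (j+k+1)) =
        cadd X (ccomp X (Par X k (idpi0 X E)) (f (j+k+1))) (ccomp X (Par X k (idpi1 X E)) (f (j+k+1))) \<and>
      ccomp X (Par X k (lift X E)) (f (j+k+2)) = f (j+k+1) \<and>
      ccomp X (Par X k (flip X E)) (f (j+k+2)) = f (j+k+2))"

lemma dseq_iff_axioms_at:
  "dseq X A B f \<longleftrightarrow> pre_dseq X A B f \<and> (\<forall>j k. dseq_axioms_at X A B f j k)"
  unfolding dseq_def dseq_axioms_at_def Dsq_funpow act_def szero_def sadd_def
  by (simp add: Let_def fun_eq_iff Pob_Pob ac_simps) blast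

lemma all_le_iff_all_add:
  "(\<forall>n k::nat. k \<le> n \<longrightarrow> P (n - k) k) \<longleftrightarrow> (\<forall>j k. P j k)"
  by (metis add_diff_cancel_right' le_add2)

theorem proposition4p2:
  fixes X :: "('o,'a) cla" and A B :: 'o and f :: "nat \<Rightarrow> 'a"
  assumes "cla_cat X"
    and "pre_dseq X A B f"
  shows "dseq X A B f \<longleftrightarrow>
    (\<forall>n k. k \<le> n \<longrightarrow> (let E = Pob X (n - k) A in
      ccomp X (Par X k (unit10 X E)) (f (n+1)) = czero X (Pob X n A) B \<and>
      ccomp X (Par X k (sumpi X E)) (f (n+1)) =
        cadd X (ccomp X (Par X k (idpi0 X E)) (f (n+1))) (ccomp X (Par X k (idpi1 X E)) (f (n+1))) \<and>
      ccomp X (Par X k (lift X E)) (f (n+2)) = f (n+1) \<and>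
      ccomp X (Par X k (flip X E)) (f (n+2)) = f (n+2)))"
proof -
  have "(\<forall>n k. k \<le> n \<longrightarrow> dseq_axioms_at X A B f (n - k) k) \<longleftrightarrow> (\<forall>j k. dseq_axioms_at X A B f j k)"
    by (rule all_le_iff_all_add)
  then show ?thesis
    using assms(2) by (simp add: dseq_iff_axioms_at dseq_axioms_at_def cong: conj_cong)
qed

end
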